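(* Let $\pi$ be a probability distribution on $\mathbb{R}^d$ with coordinates partitioned into $s$ blocks, and for a probability vector $p=(p_1,\dots,p_s)$ with all $p_i>0$ let $\mathrm{Gap}(p)$ be the $L_2$-spectral gap of the Random Scan Gibbs Sampler RSGS($p$) for $\pi$. Then for any probability vectors $p,q$ with positive entries, $$\mathrm{Gap}(p)\le\Big(\max_{i=1,\dots,s}\frac{p_i}{q_i}\Big)\mathrm{Gap}(q);$$ in particular $\mathrm{Gap}(p)\le\big(\max_{i}sp_i\big)\,\mathrm{Gap}(1/s)$, where $\mathrm{Gap}(1/s)$ is the spectral gap of RSGS with uniform selection probabilities $(1/s,\dots,1/s)$.
   Context: RSGS($p$) is the Markov kernel $P_p=\sum_{i=1}^sp_iPr_i$, where $Pr_i$ replaces the block $x_i$ of $x=(x_1,\dots,x_s)$ by a draw from the full conditional $\pi(x_i\mid x_{-i})$. For $f\in L_2(\mathbb{R}^d,\pi)$ let $\pi(f)=\int f\,d\pi$. The $L_2$-rate of convergence $\rho(p)$ is the smallest $\rho>0$ such that for all $f\in L_2(\mathbb{R}^d,\pi)$ and $r>\rho$, $\lim_{n\to\infty}r^{-2n}\mathbb{E}_\pi[\{(P_p^nf)(x)-\pi(f)\}^2]=0$, and $\mathrm{Gap}(p)=1-\rho(p)$. *)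

theory Defs
  imports "HOL-Probability.Probability"
begin

text \<open>State space: R^d represented as real^'d with 'd a finite index type (d = CARD('d)).
  The coordinates are partitioned into s blocks B 0, ..., B (s-1).\<close>

text \<open>x_{-i}: the vector x with block i erased (set to 0); all other coordinates kept.\<close>
definition drop_block :: "(nat \<Rightarrow> 'd::finite set) \<Rightarrow> nat \<Rightarrow> real^'d \<Rightarrow> real^'d" where
  "drop_block B i x = (\<chi> j. if j \<in> B i then 0 else x $ j)"

definition others_alg :: "(real^'d::finite) measure \<Rightarrow> (nat \<Rightarrow> 'd set) \<Rightarrow> nat \<Rightarrow> (real^'d) measure" where
  "others_alg \<pi> B i = vimage_algebra (space \<pi>) (drop_block B i) borel"

text \<open>Pr_i acting on L2(pi): (Pr_i f)(x) = E_pi[f | x_{-i}], i.e. integration of f against the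
  full conditional pi(x_i | x_{-i}).\<close>
definition Pr_op :: "(real^'d::finite) measure \<Rightarrow> (nat \<Rightarrow> 'd set) \<Rightarrow> nat \<Rightarrow> (real^'d \<Rightarrow> real) \<Rightarrow> (real^'d \<Rightarrow> real)" where
  "Pr_op \<pi> B i f = real_cond_exp \<pi> (others_alg \<pi> B i) f"

definition rsgs_op :: "(real^'d::finite) measure \<Rightarrow> (nat \<Rightarrow> 'd set) \<Rightarrow> nat \<Rightarrow> (nat \<Rightarrow> real)
    \<Rightarrow> (real^'d \<Rightarrow> real) \<Rightarrow> (real^'d \<Rightarrow> real)" where
  "rsgs_op \<pi> B s p f = (\<lambda>x. \<Sum>i<s. p i * Pr_op \<pi> B i f x)"

definition L2_fun :: "(real^'d::finite) measure \<Rightarrow> (real^'d \<Rightarrow> real) \<Rightarrow> bool" where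
  "L2_fun \<pi> f \<longleftrightarrow> f \<in> borel_measurable \<pi> \<and> integrable \<pi> (\<lambda>x. (f x)^2)"

definition rsgs_rate :: "(real^'d::finite) measure \<Rightarrow> (nat \<Rightarrow> 'd set) \<Rightarrow> nat \<Rightarrow> (nat \<Rightarrow> real) \<Rightarrow> real" where
  "rsgs_rate \<pi> B s p = Inf {\<rho>::real. \<rho> > 0 \<and>
     (\<forall>f. L2_fun \<pi> f \<longrightarrow> (\<forall>r>\<rho>.
        (\<lambda>n. (1 / r) ^ (2 * n) *
           (\<integral>x. (((rsgs_op \<pi> B s p ^^ n) f) x - (\<integral>y. f y \<partial>\<pi>))^2 \<partial>\<pi>)) \<longlonglongrightarrow> 0))}"

definition rsgs_gap :: "(real^'d::finite) measure \<Rightarrow> (nat \<Rightarrow> 'd set) \<Rightarrow> nat \<Rightarrow> (nat \<Rightarrow> real) \<Rightarrow> real" where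
  "rsgs_gap \<pi> B s p = 1 - rsgs_rate \<pi> B s p"

definition prob_vector :: "nat \<Rightarrow> (nat \<Rightarrow> real) \<Rightarrow> bool" where
  "prob_vector s p \<longleftrightarrow> (\<forall>i<s. p i > 0) \<and> (\<Sum>i<s. p i) = 1"

end

theory Submission
  imports Defs
begin

text \<open>Each Pr_i is an orthogonal projection on L2(pi), so P_p = sum_i p_i Pr_i is self-adjoint and
  positive with quadratic form <P_p h, h> = sum_i p_i |Pr_i h|^2. Its L2-rate is the top of the
  spectrum of P_p on mean-zero functions, i.e. the supremum of <P_p h, h> / |h|^2 over such h:
  a form bound c yields |P_p h| <= c |h| and hence geometric decay at every rate above c, while
  log-convexity of k |-> |P_p^k h|^2 forces |P_p^k h|^2 to grow like (<P_p h, h> / |h|^2)^(2k) |h|^2.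
  Since |h|^2 - <P_p h, h> = sum_i p_i (|h|^2 - |Pr_i h|^2) with nonnegative summands, it is at most
  max_i (p_i / q_i) times |h|^2 - <P_q h, h>, and taking suprema compares the gaps.\<close>

lemma nonneg_quadratic_imp_discriminant_le:
  fixes a b c :: real
  assumes nonneg: "\<And>t. 0 \<le> a + 2 * t * b + t\<^sup>2 * c" and "c \<ge> 0"
  shows "b\<^sup>2 \<le> a * c"
proof (cases "c = 0")
  case True
  have "b = 0"
  proof (rule ccontr)
    assume "b \<noteq> 0"
    have "0 \<le> a + 2 * (-(a+1)/(2*b)) * b" using nonneg[of "-(a+1)/(2*b)"] True by simp
    also have "\<dots> = -1" using \<open>b \<noteq> 0\<close> by (simp add: field_simps)
    finally show False by simp
  qed
  then show ?thesis using nonneg[of 0] True by simp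
next
  case False
  with \<open>c \<ge> 0\<close> have "c > 0" by simp
  have "0 \<le> a + 2 * (-b/c) * b + (-b/c)\<^sup>2 * c" by (rule nonneg)
  also have "\<dots> = a - b\<^sup>2 / c" using \<open>c > 0\<close> by (simp add: field_simps power2_eq_square)
  finally show ?thesis using \<open>c > 0\<close> by (simp add: field_simps)
qed

lemma log_convex_seq_ge_geometric:
  fixes b :: "nat \<Rightarrow> real"
  assumes "a > 0" "b 0 > 0" "a * b 0 \<le> b 1"
    and log_convex: "\<And>k. (b (Suc k))\<^sup>2 \<le> b k * b (Suc (Suc k))"
  shows "a ^ k * b 0 \<le> b k"
proof -
  have "a ^ k * b 0 \<le> b k \<and> a * b k \<le> b (Suc k)" for k
  proof (induction k)
    case 0
    then show ?case using assms(3) by simp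
  next
    case (Suc k)
    then have ge: "a ^ k * b 0 \<le> b k" and step: "a * b k \<le> b (Suc k)" by auto
    have "b k > 0" using ge assms(1,2) by (smt (verit) mult_pos_pos zero_less_power)
    have "b k * (a * b (Suc k)) = (a * b k) * b (Suc k)" by (simp add: algebra_simps)
    also have "\<dots> \<le> b (Suc k) * b (Suc k)"
      using step mult_pos_pos[OF assms(1) \<open>b k > 0\<close>] by (intro mult_right_mono) auto
    also have "\<dots> \<le> b k * b (Suc (Suc k))" using log_convex[of k] by (simp add: power2_eq_square)
    finally have "a * b (Suc k) \<le> b (Suc (Suc k))" using \<open>b k > 0\<close> by simp
    moreover have "a ^ Suc k * b 0 \<le> b (Suc k)"
      using ge step assms(1) by (smt (verit, best) mult.assoc mult_left_mono power_Suc)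
    ultimately show ?case by simp
  qed
  then show ?thesis by simp
qed

definition square_integrable :: "'a measure \<Rightarrow> ('a \<Rightarrow> real) \<Rightarrow> bool" where
  "square_integrable M f \<longleftrightarrow> f \<in> borel_measurable M \<and> integrable M (\<lambda>x. (f x)\<^sup>2)"

lemma square_integrable_borel_measurable: "square_integrable M f \<Longrightarrow> f \<in> borel_measurable M"
  by (simp add: square_integrable_def)

lemma (in finite_measure) square_integrable_integrable: "square_integrable M f \<Longrightarrow> integrable M f"
  unfolding square_integrable_def using square_integrable_imp_integrable by blast

lemma integrable_mult_square_integrable:
  assumes "square_integrable M f" "square_integrable M g"
  shows "integrable M (\<lambda>x. f x * g x)"
proof (rule Bochner_Integration.integrable_bound)
  show "integrable M (\<lambda>x. (f x)\<^sup>2 + (g x)\<^sup>2)" using assms by (simp add: square_integrable_def)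
  show "(\<lambda>x. f x * g x) \<in> borel_measurable M"
    using assms by (auto simp: square_integrable_def intro!: borel_measurable_times)
  show "AE x in M. norm (f x * g x) \<le> norm ((f x)\<^sup>2 + (g x)\<^sup>2)"
  proof (rule AE_I2)
    fix x
    have "0 \<le> (\<bar>f x\<bar> - \<bar>g x\<bar>)\<^sup>2" by simp
    then have "2 * \<bar>f x * g x\<bar> \<le> (f x)\<^sup>2 + (g x)\<^sup>2" by (simp add: power2_diff abs_mult)
    then show "norm (f x * g x) \<le> norm ((f x)\<^sup>2 + (g x)\<^sup>2)" by simp
  qed
qed

lemma square_integrable_add:
  "square_integrable M f \<Longrightarrow> square_integrable M g \<Longrightarrow> square_integrable M (\<lambda>x. f x + g x)"
  unfolding square_integrable_def power2_sum using integrable_mult_square_integrable[of M f g]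
  by (auto simp: square_integrable_def mult.assoc)

lemma square_integrable_cmult: "square_integrable M f \<Longrightarrow> square_integrable M (\<lambda>x. c * f x)"
  unfolding square_integrable_def power_mult_distrib by auto

lemma (in finite_measure) square_integrable_const: "square_integrable M (\<lambda>x. c)"
  unfolding square_integrable_def by auto

lemma square_integrable_diff:
  "square_integrable M f \<Longrightarrow> square_integrable M g \<Longrightarrow> square_integrable M (\<lambda>x. f x - g x)"
  using square_integrable_add[of M f "\<lambda>x. (-1) * g x"] square_integrable_cmult[of M g "-1"] by simp

lemma square_integrable_sum:
  assumes "\<And>i. i \<in> A \<Longrightarrow> square_integrable M (f i)"
  shows "square_integrable M (\<lambda>x. \<Sum>i\<in>A. f i x)"
  using assms
proof (induction A rule: infinite_finite_induct)
  case (insert a A)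
  then show ?case using square_integrable_add[of M "f a" "\<lambda>x. \<Sum>i\<in>A. f i x"] by simp
qed (simp_all add: square_integrable_def)

lemma integral_square_add_scaled:
  assumes "square_integrable M u" "square_integrable M v"
  shows "(\<integral>x. (u x + t * v x)\<^sup>2 \<partial>M) =
     (\<integral>x. (u x)\<^sup>2 \<partial>M) + 2 * t * (\<integral>x. u x * v x \<partial>M) + t\<^sup>2 * (\<integral>x. (v x)\<^sup>2 \<partial>M)"
proof -
  have "(\<lambda>x. (u x + t * v x)\<^sup>2) = (\<lambda>x. (u x)\<^sup>2 + ((2 * t) * (u x * v x) + t\<^sup>2 * (v x)\<^sup>2))"
    by (simp add: power2_eq_square algebra_simps)
  moreover have "integrable M (\<lambda>x. (u x)\<^sup>2)" "integrable M (\<lambda>x. (v x)\<^sup>2)"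
    "integrable M (\<lambda>x. u x * v x)"
    using assms integrable_mult_square_integrable by (auto simp: square_integrable_def)
  ultimately show ?thesis by simp
qed

lemma integral_Cauchy_Schwarz:
  assumes "square_integrable M u" "square_integrable M v"
  shows "(\<integral>x. u x * v x \<partial>M)\<^sup>2 \<le> (\<integral>x. (u x)\<^sup>2 \<partial>M) * (\<integral>x. (v x)\<^sup>2 \<partial>M)"
proof (rule nonneg_quadratic_imp_discriminant_le)
  fix t
  show "0 \<le> (\<integral>x. (u x)\<^sup>2 \<partial>M) + 2 * t * (\<integral>x. u x * v x \<partial>M) + t\<^sup>2 * (\<integral>x. (v x)\<^sup>2 \<partial>M)"
    using integral_square_add_scaled[OF assms, of t] integral_nonneg_AE[of "\<lambda>x. (u x + t * v x)\<^sup>2" M]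
    by simp
qed simp

locale random_scan = prob_space M for M :: "'a measure" +
  fixes F :: "nat \<Rightarrow> 'a measure" and s :: nat
  assumes subalgebra_F: "\<And>i. subalgebra M (F i)"
begin

lemma sigma_finite_subalgebra_F: "sigma_finite_subalgebra M (F i)"
  by (intro finite_measure_subalgebra_is_sigma_finite finite_measure_subalgebra.intro
      finite_measure_axioms finite_measure_subalgebra_axioms.intro subalgebra_F)

definition Pr :: "nat \<Rightarrow> ('a \<Rightarrow> real) \<Rightarrow> 'a \<Rightarrow> real" where
  "Pr i f = real_cond_exp M (F i) f"

definition scan :: "(nat \<Rightarrow> real) \<Rightarrow> ('a \<Rightarrow> real) \<Rightarrow> 'a \<Rightarrow> real" where
  "scan p f = (\<lambda>x. \<Sum>i<s. p i * Pr i f x)"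

definition scan_form :: "(nat \<Rightarrow> real) \<Rightarrow> ('a \<Rightarrow> real) \<Rightarrow> ('a \<Rightarrow> real) \<Rightarrow> real" where
  "scan_form p f g = (\<Sum>i<s. p i * (\<integral>x. Pr i f x * Pr i g x \<partial>M))"

definition weights :: "(nat \<Rightarrow> real) \<Rightarrow> bool" where
  "weights p \<longleftrightarrow> (\<forall>i<s. 0 \<le> p i) \<and> (\<Sum>i<s. p i) = 1"

lemma Pr_borel_measurable_F: "Pr i f \<in> borel_measurable (F i)"
  unfolding Pr_def by (rule borel_measurable_cond_exp)

lemma square_integrable_Pr:
  assumes "square_integrable M f" shows "square_integrable M (Pr i f)"
proof -
  have "integrable M (\<lambda>x. (real_cond_exp M (F i) f x)\<^sup>2)"
    using sigma_finite_subalgebra.integrable_convex_cond_exp[OF sigma_finite_subalgebra_F,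
        where X=f and I=UNIV and q=power2] assms convex_power2
    by (auto simp: square_integrable_def square_integrable_integrable)
  then show ?thesis
    using borel_measurable_cond_exp2 by (simp add: square_integrable_def Pr_def)
qed

lemma integral_Pr_mult:
  assumes "square_integrable M f" "square_integrable M g"
  shows "(\<integral>x. Pr i f x * g x \<partial>M) = (\<integral>x. Pr i f x * Pr i g x \<partial>M)"
  using sigma_finite_subalgebra.real_cond_exp_intg(2)[OF sigma_finite_subalgebra_F, of "Pr i f" g i]
    integrable_mult_square_integrable[OF square_integrable_Pr[OF assms(1)] assms(2)]
    Pr_borel_measurable_F assms(2)
  by (simp add: square_integrable_def Pr_def)

lemma integral_Pr:
  assumes "square_integrable M f" shows "(\<integral>x. Pr i f x \<partial>M) = (\<integral>x. f x \<partial>M)"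
  using sigma_finite_subalgebra.real_cond_exp_int(2)[OF sigma_finite_subalgebra_F
      square_integrable_integrable[OF assms]]
  by (simp add: Pr_def)

lemma integral_Pr_square_le:
  assumes "square_integrable M f"
  shows "(\<integral>x. Pr i f x * Pr i f x \<partial>M) \<le> (\<integral>x. (f x)\<^sup>2 \<partial>M)"
proof -
  define N where "N = (\<integral>x. Pr i f x * Pr i f x \<partial>M)"
  have "(\<integral>x. f x * Pr i f x \<partial>M) = N"
    using integral_Pr_mult[OF assms assms, of i] by (simp add: N_def mult.commute)
  then have "N\<^sup>2 \<le> (\<integral>x. (f x)\<^sup>2 \<partial>M) * N"
    using integral_Cauchy_Schwarz[OF assms square_integrable_Pr[OF assms], of i]
    by (simp add: N_def power2_eq_square)
  moreover have "N \<ge> 0" unfolding N_def by (rule integral_nonneg_AE) auto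
  ultimately show ?thesis unfolding N_def[symmetric]
    by (cases "N = 0") (auto simp: power2_eq_square)
qed

lemma square_integrable_scan: "square_integrable M f \<Longrightarrow> square_integrable M (scan p f)"
  unfolding scan_def by (intro square_integrable_sum square_integrable_cmult square_integrable_Pr)

lemma square_integrable_scan_iter: "square_integrable M f \<Longrightarrow> square_integrable M ((scan p ^^ n) f)"
  by (induction n) (auto intro: square_integrable_scan)

lemma integral_scan_mult:
  assumes "square_integrable M f" "square_integrable M g"
  shows "(\<integral>x. scan p f x * g x \<partial>M) = scan_form p f g"
proof -
  have "(\<integral>x. scan p f x * g x \<partial>M) = (\<integral>x. (\<Sum>i<s. p i * (Pr i f x * g x)) \<partial>M)"
    unfolding scan_def by (simp add: sum_distrib_right mult.assoc)
  also have "\<dots> = (\<Sum>i<s. p i * (\<integral>x. Pr i f x * g x \<partial>M))"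
    using assms by (subst Bochner_Integration.integral_sum)
      (auto intro!: integrable_mult_square_integrable square_integrable_Pr)
  also have "\<dots> = scan_form p f g" unfolding scan_form_def using integral_Pr_mult[OF assms] by simp
  finally show ?thesis .
qed

lemma integral_scan:
  assumes "weights p" "square_integrable M f"
  shows "(\<integral>x. scan p f x \<partial>M) = (\<integral>x. f x \<partial>M)"
proof -
  have "(\<integral>x. scan p f x \<partial>M) = (\<Sum>i<s. p i * (\<integral>x. Pr i f x \<partial>M))"
    unfolding scan_def using assms(2)
    by (subst Bochner_Integration.integral_sum)
      (auto intro!: square_integrable_integrable square_integrable_Pr)
  then show ?thesis
    using assms by (simp add: integral_Pr weights_def flip: sum_distrib_right)
qed

lemma integral_scan_iter:
  "weights p \<Longrightarrow> square_integrable M f \<Longrightarrow> (\<integral>x. (scan p ^^ n) f x \<partial>M) = (\<integral>x. f x \<partial>M)"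
  by (induction n) (auto simp: integral_scan square_integrable_scan_iter)

lemma scan_diff_const_AE:
  assumes "weights p" "square_integrable M f"
  shows "AE x in M. scan p (\<lambda>z. f z - c) x = scan p f x - c"
proof -
  have "AE x in M. Pr i (\<lambda>z. f z - c) x = Pr i f x - c" for i
  proof -
    have "AE x in M. Pr i (\<lambda>z. f z - c) x = Pr i f x - Pr i (\<lambda>z. c) x"
      using sigma_finite_subalgebra.real_cond_exp_diff[OF sigma_finite_subalgebra_F
          square_integrable_integrable[OF assms(2)], of "\<lambda>z. c" i]
      by (simp add: Pr_def)
    moreover have "AE x in M. Pr i (\<lambda>z. c) x = c"
      using sigma_finite_subalgebra.real_cond_exp_F_meas[OF sigma_finite_subalgebra_F, of "\<lambda>z. c" i]
      by (simp add: Pr_def)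
    ultimately show ?thesis by eventually_elim simp
  qed
  then have "AE x in M. \<forall>i\<in>{..<s}. Pr i (\<lambda>z. f z - c) x = Pr i f x - c"
    by (intro eventually_ball_finite) auto
  then show ?thesis
  proof eventually_elim
    case (elim x)
    then have "scan p (\<lambda>z. f z - c) x = scan p f x - (\<Sum>i<s. p i) * c"
      unfolding scan_def by (simp add: right_diff_distrib sum_subtractf sum_distrib_right)
    then show ?case using assms(1) by (simp add: weights_def)
  qed
qed

lemma scan_form_commute: "scan_form p f g = scan_form p g f"
  unfolding scan_form_def by (simp add: mult.commute)

lemma scan_form_nonneg: "weights p \<Longrightarrow> scan_form p f f \<ge> 0"
  unfolding scan_form_def
  by (intro sum_nonneg mult_nonneg_nonneg) (auto simp: weights_def intro!: integral_nonneg_AE)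

lemma scan_form_Cauchy_Schwarz:
  assumes "weights p" "square_integrable M f" "square_integrable M g"
  shows "(scan_form p f g)\<^sup>2 \<le> scan_form p f f * scan_form p g g"
proof (rule nonneg_quadratic_imp_discriminant_le)
  fix t
  have "0 \<le> (\<Sum>i<s. p i * (\<integral>x. (Pr i f x + t * Pr i g x)\<^sup>2 \<partial>M))"
    using assms(1)
    by (intro sum_nonneg mult_nonneg_nonneg) (auto simp: weights_def intro!: integral_nonneg_AE)
  also have "\<dots> = scan_form p f f + 2 * t * scan_form p f g + t\<^sup>2 * scan_form p g g"
    using integral_square_add_scaled[OF square_integrable_Pr[OF assms(2)] square_integrable_Pr[OF assms(3)]]
    unfolding scan_form_def
    by (simp add: power2_eq_square algebra_simps sum.distrib sum_distrib_left)
  finally show "0 \<le> scan_form p f f + 2 * t * scan_form p f g + t\<^sup>2 * scan_form p g g" .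
qed (rule scan_form_nonneg[OF assms(1)])

lemma integral_square_minus_scan_form:
  assumes "weights p"
  shows "(\<integral>x. (h x)\<^sup>2 \<partial>M) - scan_form p h h
    = (\<Sum>i<s. p i * ((\<integral>x. (h x)\<^sup>2 \<partial>M) - (\<integral>x. Pr i h x * Pr i h x \<partial>M)))"
  using assms unfolding scan_form_def weights_def
  by (simp add: right_diff_distrib sum_subtractf sum_distrib_right[symmetric])

lemma scan_form_le_norm:
  assumes "weights p" "square_integrable M h"
  shows "scan_form p h h \<le> (\<integral>x. (h x)\<^sup>2 \<partial>M)"
proof -
  have "0 \<le> (\<Sum>i<s. p i * ((\<integral>x. (h x)\<^sup>2 \<partial>M) - (\<integral>x. Pr i h x * Pr i h x \<partial>M)))"
    using assms integral_Pr_square_le[OF assms(2)]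
    by (intro sum_nonneg mult_nonneg_nonneg) (auto simp: weights_def)
  then show ?thesis using integral_square_minus_scan_form[OF assms(1), of h] by simp
qed

text \<open>A form bound c for scan p on mean-zero functions is also an operator-norm bound, since
  |scan p h|^4 = scan_form p h (scan p h)^2 is at most c |h|^2 times c |scan p h|^2.\<close>
lemma integral_scan_square_le:
  assumes p: "weights p" and "c \<ge> 0"
    and bound: "\<And>h. square_integrable M h \<Longrightarrow> (\<integral>x. h x \<partial>M) = 0
        \<Longrightarrow> scan_form p h h \<le> c * (\<integral>x. (h x)\<^sup>2 \<partial>M)"
    and h: "square_integrable M h" "(\<integral>x. h x \<partial>M) = 0"
  shows "(\<integral>x. (scan p h x)\<^sup>2 \<partial>M) \<le> c\<^sup>2 * (\<integral>x. (h x)\<^sup>2 \<partial>M)"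
proof -
  define g where "g = scan p h"
  have g: "square_integrable M g" "(\<integral>x. g x \<partial>M) = 0"
    unfolding g_def using square_integrable_scan[OF h(1)] integral_scan[OF p h(1)] h(2) by simp_all
  define N where "N = (\<integral>x. (g x)\<^sup>2 \<partial>M)"
  have "N \<ge> 0" unfolding N_def by (rule integral_nonneg_AE) auto
  have "scan_form p h g = N"
    using integral_scan_mult[OF h(1) g(1)] by (simp add: N_def g_def power2_eq_square)
  then have "N\<^sup>2 \<le> scan_form p h h * scan_form p g g"
    using scan_form_Cauchy_Schwarz[OF p h(1) g(1)] by simp
  also have "\<dots> \<le> (c * (\<integral>x. (h x)\<^sup>2 \<partial>M)) * (c * N)"
    using bound[OF h] bound[OF g] scan_form_nonneg[OF p] \<open>c \<ge> 0\<close> \<open>N \<ge> 0\<close>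
      integral_nonneg_AE[of "\<lambda>x. (h x)\<^sup>2" M]
    unfolding N_def by (intro mult_mono) auto
  finally have "N * N \<le> (c\<^sup>2 * (\<integral>x. (h x)\<^sup>2 \<partial>M)) * N"
    by (simp add: power2_eq_square algebra_simps)
  moreover have "(\<integral>x. (h x)\<^sup>2 \<partial>M) \<ge> 0" by (rule integral_nonneg_AE) auto
  ultimately have "N \<le> c\<^sup>2 * (\<integral>x. (h x)\<^sup>2 \<partial>M)"
    using \<open>N \<ge> 0\<close> by (cases "N = 0") auto
  then show ?thesis unfolding N_def g_def .
qed

lemma variance_scan_iter_le:
  assumes p: "weights p" and "c \<ge> 0"
    and bound: "\<And>h. square_integrable M h \<Longrightarrow> (\<integral>x. h x \<partial>M) = 0
        \<Longrightarrow> scan_form p h h \<le> c * (\<integral>x. (h x)\<^sup>2 \<partial>M)"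
    and f: "square_integrable M f"
  shows "(\<integral>x. ((scan p ^^ n) f x - (\<integral>y. f y \<partial>M))\<^sup>2 \<partial>M)
          \<le> (c\<^sup>2)^n * (\<integral>x. (f x - (\<integral>y. f y \<partial>M))\<^sup>2 \<partial>M)"
proof (induction n)
  case (Suc n)
  define \<mu> where "\<mu> = (\<integral>y. f y \<partial>M)"
  define g where "g = (\<lambda>x. (scan p ^^ n) f x - \<mu>)"
  have fn: "square_integrable M ((scan p ^^ n) f)" "square_integrable M ((scan p ^^ Suc n) f)"
    using square_integrable_scan_iter[OF f] by blast+
  have g: "square_integrable M g" "(\<integral>x. g x \<partial>M) = 0"
    unfolding g_def \<mu>_def
    using fn(1) integral_scan_iter[OF p f, of n] square_integrable_integrable[OF fn(1)]
    by (auto simp: prob_space intro: square_integrable_diff square_integrable_const)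
  have [measurable]: "(scan p ^^ Suc n) f \<in> borel_measurable M" "scan p g \<in> borel_measurable M"
    using fn(2) square_integrable_scan[OF g(1)] by (auto dest: square_integrable_borel_measurable)
  have "AE x in M. ((scan p ^^ Suc n) f x - \<mu>)\<^sup>2 = (scan p g x)\<^sup>2"
    using scan_diff_const_AE[OF p fn(1), of \<mu>] unfolding g_def by eventually_elim simp
  then have "(\<integral>x. ((scan p ^^ Suc n) f x - \<mu>)\<^sup>2 \<partial>M) = (\<integral>x. (scan p g x)\<^sup>2 \<partial>M)"
    by (rule integral_cong_AE[rotated 2]) measurable
  also have "\<dots> \<le> c\<^sup>2 * (\<integral>x. (g x)\<^sup>2 \<partial>M)"
    by (rule integral_scan_square_le[OF p \<open>c \<ge> 0\<close> bound g])
  also have "\<dots> \<le> c\<^sup>2 * ((c\<^sup>2)^n * (\<integral>x. (f x - \<mu>)\<^sup>2 \<partial>M))"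
    using Suc.IH unfolding g_def \<mu>_def by (intro mult_left_mono) auto
  finally show ?case by (simp add: \<mu>_def mult.assoc)
qed simp

definition rate_bounds :: "(nat \<Rightarrow> real) \<Rightarrow> real set" where
  "rate_bounds p = {\<rho>::real. \<rho> > 0 \<and>
     (\<forall>f. square_integrable M f \<longrightarrow> (\<forall>r>\<rho>.
        (\<lambda>n. (1 / r) ^ (2 * n) *
           (\<integral>x. (((scan p ^^ n) f) x - (\<integral>y. f y \<partial>M))\<^sup>2 \<partial>M)) \<longlonglongrightarrow> 0))}"

definition rate :: "(nat \<Rightarrow> real) \<Rightarrow> real" where
  "rate p = Inf (rate_bounds p)"

lemma rate_boundsI:
  assumes p: "weights p" and "c \<ge> 0"
    and bound: "\<And>h. square_integrable M h \<Longrightarrow> (\<integral>x. h x \<partial>M) = 0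
        \<Longrightarrow> scan_form p h h \<le> c * (\<integral>x. (h x)\<^sup>2 \<partial>M)"
    and "\<rho> > 0" "\<rho> > c"
  shows "\<rho> \<in> rate_bounds p"
  unfolding rate_bounds_def
proof (intro CollectI conjI allI impI \<open>\<rho> > 0\<close>)
  fix f r assume f: "square_integrable M f" and "r > \<rho>"
  let ?v = "\<lambda>n. (\<integral>x. (((scan p ^^ n) f) x - (\<integral>y. f y \<partial>M))\<^sup>2 \<partial>M)"
  define K where "K = (\<integral>x. (f x - (\<integral>y. f y \<partial>M))\<^sup>2 \<partial>M)"
  have "r > 0" using \<open>r > \<rho>\<close> \<open>\<rho> > 0\<close> by simp
  have "(c/r)\<^sup>2 < 1"
    using \<open>c \<ge> 0\<close> \<open>r > \<rho>\<close> \<open>\<rho> > c\<close> \<open>r > 0\<close>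
    by (simp add: power_less_one_iff abs_less_iff divide_less_eq power_strict_mono)
  then have lim: "(\<lambda>n. ((c/r)\<^sup>2)^n * K) \<longlonglongrightarrow> 0"
    by (intro tendsto_mult_left_zero LIMSEQ_power_zero) simp
  have "(1 / r) ^ (2 * n) * ?v n \<le> ((c/r)\<^sup>2)^n * K" for n
  proof -
    have "(1 / r) ^ (2 * n) * ?v n \<le> (1 / r) ^ (2 * n) * ((c\<^sup>2)^n * K)"
      unfolding K_def using variance_scan_iter_le[OF p \<open>c \<ge> 0\<close> bound f, of n] \<open>r > 0\<close>
      by (intro mult_left_mono) auto
    also have "\<dots> = ((c/r)\<^sup>2)^n * K"
      by (simp add: power_mult[symmetric] power_divide mult.commute power_mult_distrib[symmetric])
    finally show ?thesis .
  qed
  moreover have "0 \<le> (1 / r) ^ (2 * n) * ?v n" for n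
    using \<open>r > 0\<close> by (intro mult_nonneg_nonneg integral_nonneg_AE) auto
  ultimately show "(\<lambda>n. (1 / r) ^ (2 * n) * ?v n) \<longlonglongrightarrow> 0"
    by (intro real_tendsto_sandwich[OF _ _ tendsto_const lim] always_eventually allI)
qed

lemma rate_bounds_bdd_below: "bdd_below (rate_bounds p)"
  unfolding rate_bounds_def by (rule bdd_belowI[of _ 0]) auto

lemma rate_bounds_nonempty: "weights p \<Longrightarrow> rate_bounds p \<noteq> {}"
  using rate_boundsI[of p 1 2] scan_form_le_norm by auto

lemma rate_nonneg: "weights p \<Longrightarrow> 0 \<le> rate p"
  unfolding rate_def using rate_bounds_nonempty
  by (intro cInf_greatest) (auto simp: rate_bounds_def)

lemma rate_le:
  assumes "weights p" "c \<ge> 0"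
    and bound: "\<And>h. square_integrable M h \<Longrightarrow> (\<integral>x. h x \<partial>M) = 0
        \<Longrightarrow> scan_form p h h \<le> c * (\<integral>x. (h x)\<^sup>2 \<partial>M)"
  shows "rate p \<le> c"
proof (rule ccontr)
  assume "\<not> rate p \<le> c"
  then have "(c + rate p) / 2 \<in> rate_bounds p"
    using assms by (intro rate_boundsI) auto
  then have "rate p \<le> (c + rate p) / 2"
    unfolding rate_def by (rule cInf_lower[OF _ rate_bounds_bdd_below])
  then show False using \<open>\<not> rate p \<le> c\<close> by simp
qed

text \<open>By Cauchy-Schwarz, b k = |scan p ^ k h|^2 is log-convex and b 1 >= m^2 b 0 with
  m = scan_form p h h / b 0, so b k >= m^(2k) b 0; decay at rate r then forces r >= m.\<close>
lemma scan_form_le_rate_bound: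
  assumes p: "weights p" and \<rho>: "\<rho> \<in> rate_bounds p"
    and h: "square_integrable M h" "(\<integral>x. h x \<partial>M) = 0" "(\<integral>x. (h x)\<^sup>2 \<partial>M) > 0"
  shows "scan_form p h h \<le> \<rho> * (\<integral>x. (h x)\<^sup>2 \<partial>M)"
proof (rule ccontr)
  define b where "b = (\<lambda>k. \<integral>x. ((scan p ^^ k) h x)\<^sup>2 \<partial>M)"
  define m where "m = scan_form p h h / b 0"
  have "b 0 > 0" using h(3) by (simp add: b_def)
  assume "\<not> ?thesis"
  then have "m > \<rho>" using \<open>b 0 > 0\<close> by (simp add: m_def b_def field_simps)
  have "\<rho> > 0" using \<rho> by (simp add: rate_bounds_def)
  have hk: "square_integrable M ((scan p ^^ k) h)" for k by (rule square_integrable_scan_iter[OF h(1)])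
  have "m\<^sup>2 * b 0 \<le> b 1"
  proof -
    have "(scan_form p h h)\<^sup>2 \<le> b 1 * b 0"
      using integral_Cauchy_Schwarz[OF square_integrable_scan[OF h(1)] h(1), of p]
        integral_scan_mult[OF h(1) h(1)] by (simp add: b_def)
    then show ?thesis using \<open>b 0 > 0\<close> by (simp add: m_def power_divide field_simps power2_eq_square)
  qed
  moreover have "(b (Suc k))\<^sup>2 \<le> b k * b (Suc (Suc k))" for k
  proof -
    have "b (Suc k) = scan_form p ((scan p ^^ k) h) ((scan p ^^ Suc k) h)"
      using integral_scan_mult[OF hk[of k] hk[of "Suc k"], of p] by (simp add: b_def power2_eq_square)
    also have "\<dots> = (\<integral>x. (scan p ^^ Suc (Suc k)) h x * (scan p ^^ k) h x \<partial>M)"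
      using integral_scan_mult[OF hk[of "Suc k"] hk[of k], of p] by (simp add: scan_form_commute)
    finally show ?thesis
      using integral_Cauchy_Schwarz[OF hk[of "Suc (Suc k)"] hk[of k]] by (simp add: b_def mult.commute)
  qed
  ultimately have growth: "(m\<^sup>2)^k * b 0 \<le> b k" for k
    using \<open>m > \<rho>\<close> \<open>\<rho> > 0\<close> \<open>b 0 > 0\<close> by (intro log_convex_seq_ge_geometric) auto
  define r where "r = (\<rho> + m) / 2"
  have r: "r > \<rho>" "r < m" "r > 0" using \<open>m > \<rho>\<close> \<open>\<rho> > 0\<close> by (auto simp: r_def)
  have "(\<lambda>n. (1 / r) ^ (2 * n) * b n) \<longlonglongrightarrow> 0"
    using \<rho> h(1,2) r(1) by (auto simp: rate_bounds_def b_def)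
  then obtain n where n: "(1 / r) ^ (2 * n) * b n < b 0"
    using order_tendstoD(2)[of _ 0 sequentially "b 0"] \<open>b 0 > 0\<close>
    by (auto simp: eventually_sequentially)
  have "1 \<le> ((m / r)\<^sup>2)^n" using r by (simp add: one_le_power)
  then have "b 0 \<le> ((m / r)\<^sup>2)^n * b 0" using \<open>b 0 > 0\<close> by simp
  also have "\<dots> = (1 / r) ^ (2 * n) * ((m\<^sup>2)^n * b 0)"
    by (simp add: power_mult[symmetric] power_divide mult.commute power_mult_distrib[symmetric])
  also have "\<dots> \<le> (1 / r) ^ (2 * n) * b n" using growth[of n] r by (intro mult_left_mono) auto
  finally show False using n by simp
qed

lemma scan_form_le_rate:
  assumes p: "weights p" and h: "square_integrable M h" "(\<integral>x. h x \<partial>M) = 0"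
  shows "scan_form p h h \<le> rate p * (\<integral>x. (h x)\<^sup>2 \<partial>M)"
proof (cases "(\<integral>x. (h x)\<^sup>2 \<partial>M) = 0")
  case True
  have "(scan_form p h h)\<^sup>2 \<le> (\<integral>x. (scan p h x)\<^sup>2 \<partial>M) * (\<integral>x. (h x)\<^sup>2 \<partial>M)"
    using integral_Cauchy_Schwarz[OF square_integrable_scan[OF h(1)] h(1)] integral_scan_mult[OF h(1) h(1)]
    by simp
  with True show ?thesis by simp
next
  case False
  moreover have "(\<integral>x. (h x)\<^sup>2 \<partial>M) \<ge> 0" by (rule integral_nonneg_AE) auto
  ultimately have pos: "(\<integral>x. (h x)\<^sup>2 \<partial>M) > 0" by linarith
  have "scan_form p h h / (\<integral>x. (h x)\<^sup>2 \<partial>M) \<le> rate p"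
    unfolding rate_def using rate_bounds_nonempty[OF p]
  proof (rule cInf_greatest)
    fix \<rho> assume "\<rho> \<in> rate_bounds p"
    then show "scan_form p h h / (\<integral>x. (h x)\<^sup>2 \<partial>M) \<le> \<rho>"
      using scan_form_le_rate_bound[OF p _ h pos] pos by (simp add: divide_le_eq)
  qed
  then show ?thesis using pos by (simp add: divide_le_eq)
qed

lemma gap_le_mult_gap:
  assumes p: "weights p" and q: "weights q" and "C \<ge> 1" and pq: "\<And>i. i < s \<Longrightarrow> p i \<le> C * q i"
  shows "1 - rate p \<le> C * (1 - rate q)"
proof -
  define c where "c = 1 - (1 - rate p) / C"
  have "rate q \<le> c"
  proof (rule rate_le[OF q])
    show "c \<ge> 0" using \<open>C \<ge> 1\<close> rate_nonneg[OF p] by (simp add: c_def field_simps)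
    fix h assume h: "square_integrable M h" "(\<integral>x. h x \<partial>M) = 0"
    define N where "N = (\<integral>x. (h x)\<^sup>2 \<partial>M)"
    define d where "d = (\<lambda>i. N - (\<integral>x. Pr i h x * Pr i h x \<partial>M))"
    have "d i \<ge> 0" for i using integral_Pr_square_le[OF h(1)] by (simp add: d_def N_def)
    have "N - scan_form p h h = (\<Sum>i<s. p i * d i)"
      using integral_square_minus_scan_form[OF p] by (simp add: d_def N_def)
    also have "\<dots> \<le> (\<Sum>i<s. (C * q i) * d i)"
      using pq \<open>\<And>i. d i \<ge> 0\<close> by (intro sum_mono mult_right_mono) auto
    also have "\<dots> = C * (N - scan_form q h h)"
      using integral_square_minus_scan_form[OF q] by (simp add: d_def N_def sum_distrib_left mult.assoc)
    finally have "(1 - rate p) * N \<le> C * (N - scan_form q h h)"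
      using scan_form_le_rate[OF p h] by (simp add: N_def algebra_simps)
    then have "(1 - rate p) * N / C \<le> N - scan_form q h h"
      using \<open>C \<ge> 1\<close> by (simp add: pos_divide_le_eq mult.commute)
    then show "scan_form q h h \<le> c * N" by (simp add: c_def algebra_simps)
  qed
  then have "(1 - rate p) / C \<le> 1 - rate q" by (simp add: c_def)
  then show ?thesis using \<open>C \<ge> 1\<close> by (simp add: divide_le_eq mult.commute)
qed

end

lemma max_ratio_ge_one:
  fixes p q :: "nat \<Rightarrow> real"
  assumes "prob_vector s p" "prob_vector s q" "s \<ge> 1"
  shows "1 \<le> (MAX i\<in>{..<s}. p i / q i)"
proof -
  obtain i where i: "i < s" "q i \<le> p i"
  proof (rule ccontr)
    assume "\<not> thesis"
    then have "\<forall>i<s. p i < q i" using that by force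
    moreover have "{..<s} \<noteq> {}" using \<open>s \<ge> 1\<close> by (simp add: lessThan_empty_iff)
    ultimately have "(\<Sum>i<s. p i) < (\<Sum>i<s. q i)" by (intro sum_strict_mono) auto
    then show False using assms by (simp add: prob_vector_def)
  qed
  then have "1 \<le> p i / q i" using assms(2) by (auto simp: prob_vector_def)
  also have "\<dots> \<le> (MAX i\<in>{..<s}. p i / q i)" using i(1) by (intro Max_ge) auto
  finally show ?thesis .
qed

lemma borel_measurable_drop_block:
  "drop_block B i \<in> borel_measurable (borel :: (real^'d::finite) measure)"
proof (rule borel_measurable_continuous_onI)
  have "continuous_on UNIV (\<lambda>x::real^'d. if j \<in> B i then 0 else x $ j)" for j
    by (cases "j \<in> B i") (auto intro: continuous_intros)
  then show "continuous_on UNIV (drop_block B i)"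
    unfolding drop_block_def by (intro continuous_on_vec_lambda)
qed

lemma subalgebra_others_alg:
  fixes \<pi> :: "(real^'d::finite) measure"
  assumes "sets \<pi> = sets borel"
  shows "subalgebra \<pi> (others_alg \<pi> B i)"
proof -
  have "drop_block B i \<in> borel_measurable \<pi>"
    using borel_measurable_drop_block measurable_cong_sets[OF assms refl] by blast
  then show ?thesis
    unfolding subalgebra_def others_alg_def
    using sets_vimage_algebra2[of "drop_block B i" "space \<pi>" borel]
    by (auto simp: measurable_sets)
qed

lemma rsgs_gap_comparison:
  fixes \<pi> :: "(real^'d::finite) measure"
  assumes "prob_space \<pi>" "sets \<pi> = sets borel" "s \<ge> 1" "prob_vector s p" "prob_vector s q"
  shows "rsgs_gap \<pi> B s p \<le> (MAX i\<in>{..<s}. p i / q i) * rsgs_gap \<pi> B s q"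
proof -
  interpret random_scan \<pi> "others_alg \<pi> B" s
    by (intro random_scan.intro random_scan_axioms.intro assms(1) subalgebra_others_alg assms(2))
  have "rsgs_gap \<pi> B s p' = 1 - rate p'" for p'
    unfolding rsgs_gap_def rsgs_rate_def rate_def rate_bounds_def rsgs_op_def scan_def Pr_op_def Pr_def
      L2_fun_def square_integrable_def ..
  moreover have "weights p" "weights q"
    using assms(4,5) unfolding prob_vector_def weights_def by (auto intro: less_imp_le)
  moreover have "p i \<le> (MAX i\<in>{..<s}. p i / q i) * q i" if "i < s" for i
    using Max_ge[of "(\<lambda>i. p i / q i) ` {..<s}" "p i / q i"] that assms(5)
    by (auto simp: prob_vector_def divide_le_eq mult.commute)
  ultimately show ?thesis
    using gap_le_mult_gap max_ratio_ge_one[OF assms(4,5,3)] by simp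
qed

theorem theorem4:
  fixes \<pi> :: "(real^'d::finite) measure"
    and B :: "nat \<Rightarrow> 'd set"
    and s :: nat
    and p q :: "nat \<Rightarrow> real"
  assumes "prob_space \<pi>"
    and "sets \<pi> = sets borel"
    and "s \<ge> 1"
    and "\<forall>i<s. B i \<noteq> {}"
    and "\<forall>i<s. \<forall>j<s. i \<noteq> j \<longrightarrow> B i \<inter> B j = {}"
    and "(\<Union>i<s. B i) = UNIV"
    and "prob_vector s p"
    and "prob_vector s q"
  shows "rsgs_gap \<pi> B s p \<le> (MAX i\<in>{..<s}. p i / q i) * rsgs_gap \<pi> B s q
       \<and> rsgs_gap \<pi> B s p \<le> (MAX i\<in>{..<s}. real s * p i) * rsgs_gap \<pi> B s (\<lambda>_. 1 / real s)"
proof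
  show "rsgs_gap \<pi> B s p \<le> (MAX i\<in>{..<s}. p i / q i) * rsgs_gap \<pi> B s q"
    using rsgs_gap_comparison assms(1-3,7,8) .
  have "prob_vector s (\<lambda>_. 1 / real s)" using assms(3) by (simp add: prob_vector_def)
  then have "rsgs_gap \<pi> B s p \<le> (MAX i\<in>{..<s}. p i / (1 / real s)) * rsgs_gap \<pi> B s (\<lambda>_. 1 / real s)"
    using rsgs_gap_comparison assms(1-3,7) by blast
  then show "rsgs_gap \<pi> B s p \<le> (MAX i\<in>{..<s}. real s * p i) * rsgs_gap \<pi> B s (\<lambda>_. 1 / real s)"
    by (simp add: mult.commute)
qed

end
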